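(* Let $c>0$ and let $G$ be an $n$-vertex graph. If $\delta^{(2)}(G)\ge cn$, then $\hat\delta^{(2,2)}(G)\ge 2-1/c$.
   Context: $\delta^{(2)}(G)=\min\{|N(u)\cap N(v)|: u\ne v,\ uv\notin E(G)\}$. $\hat\delta^{(2,2)}(G)$ is the minimum, over all pairs of distinct non-adjacent vertices $u,v$, of the edge density $e(G[N(u)\cap N(v)])/\binom{|N(u)\cap N(v)|}{2}$ of the subgraph induced on their common neighborhood. *)

theory Defs
  imports Complex_Main
begin

definition simple_graph :: "'a set \<Rightarrow> ('a \<Rightarrow> 'a \<Rightarrow> bool) \<Rightarrow> bool" where
  "simple_graph V E \<longleftrightarrow> finite V \<and> (\<forall>u v. E u v \<longrightarrow> u \<in> V \<and> v \<in> V)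
     \<and> (\<forall>u v. E u v \<longrightarrow> E v u) \<and> (\<forall>u. \<not> E u u)"

definition nbhd :: "'a set \<Rightarrow> ('a \<Rightarrow> 'a \<Rightarrow> bool) \<Rightarrow> 'a \<Rightarrow> 'a set" where
  "nbhd V E u = {w \<in> V. E u w}"

definition common_nbhd :: "'a set \<Rightarrow> ('a \<Rightarrow> 'a \<Rightarrow> bool) \<Rightarrow> 'a \<Rightarrow> 'a \<Rightarrow> 'a set" where
  "common_nbhd V E u v = nbhd V E u \<inter> nbhd V E v"

definition induced_edges :: "('a \<Rightarrow> 'a \<Rightarrow> bool) \<Rightarrow> 'a set \<Rightarrow> nat" where
  "induced_edges E S = card {{x, y} | x y. x \<in> S \<and> y \<in> S \<and> E x y}"

text \<open>Edge density e(G[S]) / binom(|S|,2) (HOL convention: x/0 = 0).\<close>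
definition edge_density :: "('a \<Rightarrow> 'a \<Rightarrow> bool) \<Rightarrow> 'a set \<Rightarrow> real" where
  "edge_density E S = real (induced_edges E S) / real (card S choose 2)"

text \<open>Pairs of distinct non-adjacent vertices, over which the minima
  delta^(2) and hat-delta^(2,2) are taken.\<close>
definition nonadj_pair :: "'a set \<Rightarrow> ('a \<Rightarrow> 'a \<Rightarrow> bool) \<Rightarrow> 'a \<Rightarrow> 'a \<Rightarrow> bool" where
  "nonadj_pair V E u v \<longleftrightarrow> u \<in> V \<and> v \<in> V \<and> u \<noteq> v \<and> \<not> E u v"

end

(* Every vertex x of S = N(u) \<inter> N(v) has many neighbours inside S. If x is adjacent to
   all other vertices it has |S| - 1 of them. Otherwise x has a non-neighbour w, so
   |N(x)| \<ge> |N(x) \<inter> N(w)| \<ge> cn, and inclusion-exclusion inside V gives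
   |N(x) \<inter> S| \<ge> cn + |S| - n \<ge> (2 - 1/c)|S|, because |S| \<ge> cn and c \<le> 1.
   Summing these degrees over S counts every edge of G[S] at most twice. *)
theory Submission
  imports Defs
begin

lemma sum_degree_le_twice_induced_edges:
  assumes "finite S" and irrefl: "\<forall>x. \<not> E x x"
  shows "(\<Sum>x\<in>S. card {y\<in>S. E x y}) \<le> 2 * induced_edges E S"
proof -
  define edges where "edges = {{x, y} | x y. x \<in> S \<and> y \<in> S \<and> E x y}"
  define orientations where "orientations e = {(x, y) \<in> e \<times> e. x \<noteq> y}" for e :: "'a set"
  have "edges \<subseteq> Pow S"
    unfolding edges_def by auto
  then have fin_edges: "finite edges"
    using \<open>finite S\<close> by (simp add: finite_subset)
  have fin_orientations: "finite (orientations e)" if "e \<in> edges" for e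
  proof -
    have "finite e"
      using that unfolding edges_def by auto
    moreover have "orientations e \<subseteq> e \<times> e"
      unfolding orientations_def by auto
    ultimately show ?thesis
      by (meson finite_SigmaI finite_subset)
  qed
  have card_orientations: "card (orientations e) \<le> 2" if "e \<in> edges" for e
  proof -
    obtain a b where e: "e = {a, b}"
      using \<open>e \<in> edges\<close> unfolding edges_def by auto
    have "card (orientations e) \<le> card {(a, b), (b, a)}"
      by (rule card_mono) (auto simp: orientations_def e)
    also have "\<dots> \<le> 2"
      by (rule card_insert_le_m1) auto
    finally show ?thesis .
  qed
  have "(SIGMA x:S. {y\<in>S. E x y}) \<subseteq> (\<Union>e\<in>edges. orientations e)"
  proof
    fix p
    assume "p \<in> (SIGMA x:S. {y\<in>S. E x y})"
    then obtain x y where p: "p = (x, y)" "x \<in> S" "y \<in> S" "E x y"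
      by auto
    then have "p \<in> orientations {x, y}" and "{x, y} \<in> edges"
      using irrefl unfolding orientations_def edges_def by auto
    then show "p \<in> (\<Union>e\<in>edges. orientations e)"
      by blast
  qed
  then have "card (SIGMA x:S. {y\<in>S. E x y}) \<le> card (\<Union>e\<in>edges. orientations e)"
    using fin_edges fin_orientations by (intro card_mono) auto
  also have "\<dots> \<le> (\<Sum>e\<in>edges. card (orientations e))"
    by (rule card_UN_le[OF fin_edges])
  also have "\<dots> \<le> (\<Sum>e\<in>edges. 2)"
    by (rule sum_mono) (rule card_orientations)
  also have "\<dots> = 2 * induced_edges E S"
    unfolding induced_edges_def edges_def by simp
  finally show ?thesis
    using \<open>finite S\<close> by simp
qed

lemma edge_density_ge_of_min_degree:
  fixes d :: real
  assumes "finite S" and "\<forall>x. \<not> E x x" and "card S \<ge> 2"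
    and min_degree: "\<And>x. x \<in> S \<Longrightarrow> (real (card S) - 1) * d \<le> real (card {y\<in>S. E x y})"
  shows "d \<le> edge_density E S"
proof -
  define s where "s = card S"
  have "real s * ((real s - 1) * d) \<le> (\<Sum>x\<in>S. real (card {y\<in>S. E x y}))"
    using sum_bounded_below[of S, OF min_degree] unfolding s_def by simp
  also have "\<dots> \<le> 2 * real (induced_edges E S)"
    using sum_degree_le_twice_induced_edges[of S E, OF assms(1,2)] by (simp flip: of_nat_sum)
  finally have "real s * (real s - 1) * d \<le> 2 * real (induced_edges E S)"
    by (simp add: mult.assoc)
  moreover have "real s * (real s - 1) = 2 * real (s choose 2)"
  proof -
    have "even (s * (s - 1))"
      by (cases "even s") auto
    then have "2 * (s choose 2) = s * (s - 1)"
      by (simp add: choose_two)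
    then have "2 * real (s choose 2) = real s * real (s - 1)"
      by (metis of_nat_mult of_nat_numeral)
    then show ?thesis
      using \<open>card S \<ge> 2\<close> unfolding s_def by simp
  qed
  moreover have "real (s choose 2) > 0"
    using \<open>card S \<ge> 2\<close> unfolding s_def by simp
  ultimately show ?thesis
    unfolding edge_density_def s_def[symmetric] by (simp add: pos_le_divide_eq mult.commute)
qed

lemma card_Int_ge_of_subsets:
  assumes "finite V" and "A \<subseteq> V" and "B \<subseteq> V"
  shows "card A + card B \<le> card V + card (A \<inter> B)"
proof -
  have "card A + card B = card (A \<union> B) + card (A \<inter> B)"
    using assms by (intro card_Un_Int) (auto intro: finite_subset)
  moreover have "card (A \<union> B) \<le> card V"
    using assms by (intro card_mono) auto
  ultimately show ?thesis
    by linarith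
qed

lemma card_common_nbhd_le_card_nbhd:
  assumes "finite V"
  shows "card (common_nbhd V E u v) \<le> card (nbhd V E u)"
  using assms unfolding common_nbhd_def nbhd_def by (intro card_mono) auto

lemma two_minus_inverse_le_of_le_one:
  fixes c s n :: real
  assumes "0 < c" and "c \<le> 1" and "c * n \<le> s"
  shows "s * (2 - 1 / c) \<le> c * n + s - n"
proof -
  have "(c - 1) * s \<le> (c - 1) * (c * n)"
    using assms by (intro mult_left_mono_neg) auto
  then have "c * (s * (2 - 1 / c)) \<le> c * (c * n + s - n)"
    using \<open>0 < c\<close> by (simp add: algebra_simps)
  then show ?thesis
    using \<open>0 < c\<close> by simp
qed

lemma min_degree_in_large_subset:
  fixes c :: real
  assumes G: "simple_graph V E"
    and "1 / 2 \<le> c" and "c \<le> 1"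
    and codegree: "\<forall>u v. nonadj_pair V E u v \<longrightarrow> real (card (common_nbhd V E u v)) \<ge> c * real (card V)"
    and "S \<subseteq> V" and large: "c * real (card V) \<le> real (card S)"
    and "x \<in> S"
  shows "(real (card S) - 1) * (2 - 1 / c) \<le> real (card {y\<in>S. E x y})"
proof -
  have "finite V" and irrefl: "\<forall>x. \<not> E x x"
    using G unfolding simple_graph_def by blast+
  have "0 < c"
    using \<open>1 / 2 \<le> c\<close> by simp
  have "2 - 1 / c \<le> 1" and "0 \<le> 2 - 1 / c"
    using \<open>1 / 2 \<le> c\<close> \<open>c \<le> 1\<close> \<open>0 < c\<close> by (simp_all add: field_simps)
  show ?thesis
  proof (cases "\<forall>w\<in>V. w \<noteq> x \<longrightarrow> E x w")
    case True
    have "0 < card S"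
      using \<open>x \<in> S\<close> \<open>finite V\<close> \<open>S \<subseteq> V\<close> by (auto simp: card_gt_0_iff intro: finite_subset)
    have "{y\<in>S. E x y} = S - {x}"
      using True \<open>S \<subseteq> V\<close> irrefl by auto
    then have "real (card {y\<in>S. E x y}) = real (card S) - 1"
      using \<open>x \<in> S\<close> \<open>0 < card S\<close> by simp
    then show ?thesis
      using \<open>2 - 1 / c \<le> 1\<close> \<open>0 < card S\<close> by (simp add: mult_left_le)
  next
    case False
    then obtain w where "nonadj_pair V E x w"
      using \<open>x \<in> S\<close> \<open>S \<subseteq> V\<close> unfolding nonadj_pair_def by auto
    then have "c * real (card V) \<le> real (card (nbhd V E x))"
      using codegree card_common_nbhd_le_card_nbhd[OF \<open>finite V\<close>, of E x w]
      by (meson of_nat_le_iff order_trans)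
    moreover have "card (nbhd V E x) + card S \<le> card V + card {y\<in>S. E x y}"
    proof -
      have "nbhd V E x \<inter> S = {y\<in>S. E x y}"
        using \<open>S \<subseteq> V\<close> unfolding nbhd_def by auto
      then show ?thesis
        using card_Int_ge_of_subsets[OF \<open>finite V\<close>, of "nbhd V E x" S] \<open>S \<subseteq> V\<close>
        unfolding nbhd_def by auto
    qed
    ultimately have "c * real (card V) + real (card S) - real (card V) \<le> real (card {y\<in>S. E x y})"
      by linarith
    moreover have "real (card S) * (2 - 1 / c) \<le> c * real (card V) + real (card S) - real (card V)"
      using two_minus_inverse_le_of_le_one[OF \<open>0 < c\<close> \<open>c \<le> 1\<close> large] .
    moreover have "(real (card S) - 1) * (2 - 1 / c) \<le> real (card S) * (2 - 1 / c)"
      using \<open>0 \<le> 2 - 1 / c\<close> by (simp add: algebra_simps)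
    ultimately show ?thesis
      by linarith
  qed
qed

lemma edge_density_ge_of_large_subset:
  fixes c :: real
  assumes G: "simple_graph V E" and "0 < c" and "2 \<le> card V"
    and codegree: "\<forall>u v. nonadj_pair V E u v \<longrightarrow> real (card (common_nbhd V E u v)) \<ge> c * real (card V)"
    and "S \<subseteq> V" and large: "c * real (card V) \<le> real (card S)"
  shows "2 - 1 / c \<le> edge_density E S"
proof (cases "1 / 2 < c")
  case False
  then have "2 - 1 / c \<le> 0"
    using \<open>0 < c\<close> by (simp add: field_simps)
  moreover have "0 \<le> edge_density E S"
    unfolding edge_density_def by simp
  ultimately show ?thesis
    by linarith
next
  case True
  have "finite V" and irrefl: "\<forall>x. \<not> E x x"
    using G unfolding simple_graph_def by blast+
  then have "finite S"
    using \<open>S \<subseteq> V\<close> by (auto intro: finite_subset)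
  have "card S \<le> card V"
    using \<open>finite V\<close> \<open>S \<subseteq> V\<close> by (rule card_mono)
  then have "c * real (card V) \<le> 1 * real (card V)"
    using large by simp
  then have "c \<le> 1"
    using \<open>2 \<le> card V\<close> by (simp add: mult_le_cancel_right)
  have "c * 2 \<le> c * real (card V)"
    using \<open>0 < c\<close> \<open>2 \<le> card V\<close> by simp
  then have "2 \<le> card S"
    using True large by linarith
  show ?thesis
  proof (rule edge_density_ge_of_min_degree[of S E, OF \<open>finite S\<close> irrefl \<open>2 \<le> card S\<close>])
    fix x
    assume "x \<in> S"
    then show "(real (card S) - 1) * (2 - 1 / c) \<le> real (card {y\<in>S. E x y})"
      using min_degree_in_large_subset[OF G less_imp_le[OF True] \<open>c \<le> 1\<close> codegree \<open>S \<subseteq> V\<close> large]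
      by blast
  qed
qed

lemma two_le_card_of_nonadj_pair:
  assumes "finite V" and "nonadj_pair V E u v"
  shows "2 \<le> card V"
proof -
  have "card {u, v} \<le> card V"
    using assms unfolding nonadj_pair_def by (intro card_mono) auto
  then show ?thesis
    using assms(2) unfolding nonadj_pair_def by simp
qed

theorem proposition4p4:
  fixes V :: "'a set" and E :: "'a \<Rightarrow> 'a \<Rightarrow> bool" and c :: real and n :: nat
  assumes "simple_graph V E"
    and "card V = n"
    and "c > 0"
    and "\<forall>u v. nonadj_pair V E u v \<longrightarrow> real (card (common_nbhd V E u v)) \<ge> c * real n"
  shows "\<forall>u v. nonadj_pair V E u v \<longrightarrow> edge_density E (common_nbhd V E u v) \<ge> 2 - 1 / c"
proof (intro allI impI)
  fix u v
  assume "nonadj_pair V E u v"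
  moreover have "finite V"
    using assms(1) unfolding simple_graph_def by blast
  ultimately have "2 \<le> card V"
    by (rule two_le_card_of_nonadj_pair[rotated])
  have "common_nbhd V E u v \<subseteq> V"
    unfolding common_nbhd_def nbhd_def by auto
  with assms \<open>2 \<le> card V\<close> \<open>nonadj_pair V E u v\<close>
  show "2 - 1 / c \<le> edge_density E (common_nbhd V E u v)"
    by (intro edge_density_ge_of_large_subset) auto
qed

end
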